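(* Let $k\in\omega\setminus\{0\}$, let $f_{i_1},\dots,f_{i_n}\in\{f_1,\dots,f_{m(k)}\}$ ($n\ge0$), and let $T=T_k^*(f_{i_1},0)\cdots(f_{i_n},0)$. If $T\ne\Lambda$, then $r(T)\ge\max(1,k-n)$.
   Context: Notation: $\omega=\{0,1,2,\dots\}$; $\mathcal P(\omega)$ is the set of nonempty finite subsets of $\omega$; $E_2=\{0,1\}$. $P=\{f_i:i\in\omega\}$ is a set of attributes. Decision tables: $\mathcal M_2^\infty$ is the set of rectangular tables filled with numbers from $E_2$, whose columns are labeled with pairwise different attributes from $P$, whose rows are pairwise different, and each row of which is labeled with a set from $\mathcal P(\omega)$ (its set of decisions). The empty table is denoted $\Lambda$. For nonempty $T$ and a word $\alpha=(f_{i_1},\delta_1)\cdots(f_{i_m},\delta_m)$ with $f_{i_j}$ column attributes of $T$ and $\delta_j\in E_2$, $T\alpha$ is the subtable consisting of the rows having value $\delta_j$ in column $f_{i_j}$ for all $j$; $T\lambda=T$ for the empty word; $\Lambda\alpha=\Lambda$. The graph $G_k$ and tables $T_k$, $T_k^*$ ($k\ge1$): $G_k$ is a directed graph whose nodes are arranged in $k$ layers, layer $s$ ($1\le s\le k$) containing $s$ nodes; the nodes are numbered $1,\dots,m(k)$, $m(k)=k(k+1)/2$, layer by layer from the top and from left to right within a layer (so the $j$th node of layer $s$ has number $s(s-1)/2+j$). For a node $i$ that is the $j$th node of layer $s<k$, its left child $l(i)$ is the $j$th node of layer $s+1$ and its right child $p(i)$ is the $(j+1)$th node of layer $s+1$;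 the edges of $G_k$ go from each node to its two children. Define $\nu_k:E_2^{m(k)}\to\mathcal P(\omega)$: for $\bar\delta=(\delta_1,\dots,\delta_{m(k)})$, $\nu_k(\bar\delta)\subseteq\{0,1,\dots,m(k)\}$, where $0\in\nu_k(\bar\delta)$ iff $\delta_1=0$; for a node $i$ not in layer $k$, $i\in\nu_k(\bar\delta)$ iff $\delta_i=1$ and $\delta_{l(i)}=\delta_{p(i)}=0$; for a node $i$ in layer $k$, $i\in\nu_k(\bar\delta)$ iff $\delta_i=1$. $T_k\in\mathcal M_2^\infty$ is the table with $m(k)$ columns labeled $f_1,\dots,f_{m(k)}$ (column $f_i$ corresponding to node $i$), whose rows are all $2^{m(k)}$ tuples of $E_2^{m(k)}$, each row $\bar\delta$ labeled with $\nu_k(\bar\delta)$. A complete path in $G_k$ is a directed path from node $1$ to a node of layer $k$; its characteristic tuple is $(\delta_1,\dots,\delta_{m(k)})\in E_2^{m(k)}$ with $\delta_i=1$ iff the path passes through node $i$. $T_k^*$ is the subtable of $T_k$ consisting of exactly the rows that are characteristic tuples of complete paths in $G_k$. For a subtable $T$ of $T_k^*$ with rows $\bar\delta_1,\dots,\bar\delta_t$, $r(T)=|\{\nu_k(\bar\delta_1),\dots,\nu_k(\bar\delta_t)\}|$ (the number of distinct decision sets among its rows). *)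

theory Defs
  imports Main
begin

text \<open>Number of nodes of G_k.\<close>
definition m :: "nat \<Rightarrow> nat" where
  "m k = k * (k + 1) div 2"

text \<open>Layer of node i (for i \<ge> 1): the least s with i \<le> s(s+1)/2.
  The j-th node of layer s has number s(s-1)/2 + j.\<close>
definition layer :: "nat \<Rightarrow> nat" where
  "layer i = (LEAST s. i \<le> s * (s + 1) div 2)"

definition pos_in_layer :: "nat \<Rightarrow> nat" where
  "pos_in_layer i = i - layer i * (layer i - 1) div 2"

definition node_num :: "nat \<Rightarrow> nat \<Rightarrow> nat" where
  "node_num s j = s * (s - 1) div 2 + j"

definition lch :: "nat \<Rightarrow> nat" where
  "lch i = node_num (layer i + 1) (pos_in_layer i)"

definition rch :: "nat \<Rightarrow> nat" where
  "rch i = node_num (layer i + 1) (pos_in_layer i + 1)"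

definition edge :: "nat \<Rightarrow> nat \<Rightarrow> nat \<Rightarrow> bool" where
  "edge k i j \<longleftrightarrow> i \<in> {1..m k} \<and> layer i < k \<and> (j = lch i \<or> j = rch i)"

text \<open>Tuples of E_2^{m(k)} are lists of length m(k) over {0,1};
  component \<delta>_i (1 \<le> i \<le> m(k)) is \<delta> ! (i - 1).\<close>
definition comp :: "nat list \<Rightarrow> nat \<Rightarrow> nat" where
  "comp \<delta> i = \<delta> ! (i - 1)"

definition tuples :: "nat \<Rightarrow> nat list set" where
  "tuples k = {\<delta>. length \<delta> = m k \<and> set \<delta> \<subseteq> {0, 1}}"

definition nu :: "nat \<Rightarrow> nat list \<Rightarrow> nat set" where
  "nu k \<delta> =
     (if comp \<delta> 1 = 0 then {0} else {})
     \<union> {i \<in> {1..m k}. layer i < k \<and> comp \<delta> i = 1 \<and> comp \<delta> (lch i) = 0 \<and> comp \<delta> (rch i) = 0}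
     \<union> {i \<in> {1..m k}. layer i = k \<and> comp \<delta> i = 1}"

definition complete_path :: "nat \<Rightarrow> nat list \<Rightarrow> bool" where
  "complete_path k ps \<longleftrightarrow> ps \<noteq> [] \<and> hd ps = 1 \<and> last ps \<in> {1..m k} \<and> layer (last ps) = k
     \<and> (\<forall>t. Suc t < length ps \<longrightarrow> edge k (ps ! t) (ps ! Suc t))"

definition char_tuple :: "nat \<Rightarrow> nat list \<Rightarrow> nat list" where
  "char_tuple k ps = map (\<lambda>i. if i \<in> set ps then 1 else 0) [1..<m k + 1]"

text \<open>A subtable is represented by its set of rows (columns f_1..f_{m(k)}, row labels given by nu k);
  the empty table \<Lambda> is the empty row set.\<close>
definition Tk_rows :: "nat \<Rightarrow> nat list set" where
  "Tk_rows k = tuples k"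

definition Tstar_rows :: "nat \<Rightarrow> nat list set" where
  "Tstar_rows k = {char_tuple k ps | ps. complete_path k ps}"

text \<open>T(f_{i_1},\<delta>_1)...(f_{i_n},\<delta>_n) for a word given as list of (attribute index, value).\<close>
definition subtable :: "nat list set \<Rightarrow> (nat \<times> nat) list \<Rightarrow> nat list set" where
  "subtable T \<alpha> = {\<delta> \<in> T. \<forall>(i, d) \<in> set \<alpha>. comp \<delta> i = d}"

definition r :: "nat \<Rightarrow> nat list set \<Rightarrow> nat" where
  "r k T = card (nu k ` T)"

end

theory Submission
  imports Defs
begin

text \<open>
  A row of \<open>T\<^sub>k\<^sup>*\<close> is the characteristic tuple of a path from the root to the bottom
  layer of \<open>G\<^sub>k\<close>, and its decision set is the singleton of the endpoint of that path.
  The constraints \<open>(f\<^sub>i, 0)\<close> forbid the nodes \<open>i\<close> of a set \<open>A\<close>, so \<open>r(T)\<close> is the number of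
  endpoints of paths avoiding \<open>A\<close>. Going down one layer, the children of the nodes in
  positions \<open>J\<close> sit in positions \<open>J \<union> (J + 1)\<close>, so a nonempty set of reachable nodes has
  strictly more children, and each forbidden node of the next layer removes at most one of them.
  Hence at least \<open>k - |A|\<close> endpoints remain.
\<close>

lemma m_Suc: "m (Suc k) = m k + Suc k"
  by (simp add: m_def algebra_simps)

lemma mono_m: "mono m"
  unfolding mono_iff_le_Suc by (simp add: m_Suc)

lemma node_num_eq: "node_num s j = m (s - 1) + j"
  by (cases s) (simp_all add: node_num_def m_def mult.commute)

lemma node_num_le_m: "j \<le> s \<Longrightarrow> node_num s j \<le> m s"
  using m_Suc[of "s - 1"] by (cases s) (simp_all add: node_num_eq)

lemma inj_node_num: "inj (node_num s)"
  by (rule injI) (simp add: node_num_def)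

lemma layer_node_num:
  assumes "1 \<le> j" "j \<le> s"
  shows "layer (node_num s j) = s"
  unfolding layer_def m_def[symmetric]
proof (rule Least_equality)
  show "node_num s j \<le> m s" using assms(2) by (rule node_num_le_m)
next
  fix y assume y: "node_num s j \<le> m y"
  show "s \<le> y"
  proof (rule ccontr)
    assume "\<not> s \<le> y"
    then have "m y \<le> m (s - 1)" by (intro monoD[OF mono_m]) simp
    with y assms show False by (simp add: node_num_eq)
  qed
qed

lemma pos_in_layer_node_num: "1 \<le> j \<Longrightarrow> j \<le> s \<Longrightarrow> pos_in_layer (node_num s j) = j"
  by (simp add: pos_in_layer_def layer_node_num) (simp add: node_num_def)

lemma lch_node_num: "1 \<le> j \<Longrightarrow> j \<le> s \<Longrightarrow> lch (node_num s j) = node_num (Suc s) j"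
  by (simp add: lch_def layer_node_num pos_in_layer_node_num)

lemma rch_node_num: "1 \<le> j \<Longrightarrow> j \<le> s \<Longrightarrow> rch (node_num s j) = node_num (Suc s) (Suc j)"
  by (simp add: rch_def layer_node_num pos_in_layer_node_num)

definition child :: "nat \<Rightarrow> nat \<Rightarrow> bool" where
  "child i j \<longleftrightarrow> j = lch i \<or> j = rch i"

definition tree_path :: "nat list \<Rightarrow> bool" where
  "tree_path ps \<longleftrightarrow> ps \<noteq> [] \<and> hd ps = 1 \<and> successively child ps"

lemma tree_path_snoc_iff:
  "ps \<noteq> [] \<Longrightarrow> tree_path (ps @ [x]) \<longleftrightarrow> tree_path ps \<and> child (last ps) x"
  by (auto simp: tree_path_def successively_append_iff)

lemma tree_path_nth:
  assumes "tree_path ps" "t < length ps"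
  obtains j where "1 \<le> j" "j \<le> Suc t" "ps ! t = node_num (Suc t) j"
proof -
  have "\<exists>j. 1 \<le> j \<and> j \<le> Suc t \<and> ps ! t = node_num (Suc t) j"
    using assms(2)
  proof (induction t)
    case 0
    have "ps ! 0 = 1" using assms(1) by (auto simp: tree_path_def hd_conv_nth)
    then show ?case by (intro exI[of _ 1]) (simp add: node_num_def)
  next
    case (Suc t)
    then obtain j where j: "1 \<le> j" "j \<le> Suc t" "ps ! t = node_num (Suc t) j" by auto
    have "child (ps ! t) (ps ! Suc t)"
      using assms(1) Suc.prems by (simp add: tree_path_def successively_nth)
    then show ?case using j lch_node_num[OF j(1,2)] rch_node_num[OF j(1,2)]
      by (auto simp: child_def)
  qed
  then show thesis using that by blast
qed

lemma layer_tree_path_nth: "tree_path ps \<Longrightarrow> t < length ps \<Longrightarrow> layer (ps ! t) = Suc t"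
  by (metis tree_path_nth layer_node_num)

lemma tree_path_nth_bounds: "tree_path ps \<Longrightarrow> t < length ps \<Longrightarrow> ps ! t \<in> {1..m (Suc t)}"
  by (metis tree_path_nth node_num_le_m node_num_eq atLeastAtMost_iff le_add2 order.trans)

lemma set_tree_path:
  assumes "tree_path ps"
  shows "set ps \<subseteq> {1..m (length ps)}"
proof
  fix x assume "x \<in> set ps"
  then obtain t where t: "t < length ps" "x = ps ! t" by (auto simp: in_set_conv_nth)
  have "m (Suc t) \<le> m (length ps)" using t(1) by (intro monoD[OF mono_m]) simp
  then show "x \<in> {1..m (length ps)}" using tree_path_nth_bounds[OF assms t(1)] t(2) by auto
qed

lemma layer_last_tree_path: "tree_path ps \<Longrightarrow> layer (last ps) = length ps"
  using layer_tree_path_nth[of ps "length ps - 1"]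
  by (simp add: tree_path_def last_conv_nth)

lemma complete_path_iff:
  assumes "1 \<le> k"
  shows "complete_path k ps \<longleftrightarrow> tree_path ps \<and> length ps = k"
proof
  assume c: "complete_path k ps"
  then have p: "tree_path ps"
    by (auto simp: complete_path_def tree_path_def successively_conv_nth edge_def child_def)
  with c show "tree_path ps \<and> length ps = k"
    using layer_last_tree_path by (simp add: complete_path_def)
next
  assume p: "tree_path ps \<and> length ps = k"
  have "set ps \<subseteq> {1..m k}" using p set_tree_path by blast
  moreover have "ps \<noteq> []" using p by (simp add: tree_path_def)
  moreover have "last ps \<in> {1..m k}" using calculation by (meson last_in_set subsetD)
  moreover have "ps ! t \<in> {1..m k} \<and> layer (ps ! t) < k" if "Suc t < length ps" for t
    using p that layer_tree_path_nth[of ps t] nth_mem[of t ps] \<open>set ps \<subseteq> {1..m k}\<close>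
    by (simp add: subset_iff)
  ultimately show "complete_path k ps"
    using p layer_last_tree_path[of ps]
    by (auto simp: complete_path_def tree_path_def edge_def child_def successively_conv_nth)
qed

lemma comp_char_tuple:
  assumes "i \<in> {1..m k}"
  shows "comp (char_tuple k ps) i = (if i \<in> set ps then 1 else 0)"
proof -
  have "i - 1 < m k" "[1..<m k + 1] ! (i - 1) = i" using assms by (auto simp del: upt_Suc)
  then show ?thesis by (simp add: comp_def char_tuple_def del: upt_Suc)
qed

lemma tree_path_nth_layer:
  assumes "tree_path ps" "i \<in> set ps"
  shows "0 < layer i" "layer i \<le> length ps" "ps ! (layer i - 1) = i"
proof -
  obtain t where "t < length ps" "ps ! t = i" using assms(2) by (auto simp: in_set_conv_nth)
  with layer_tree_path_nth[OF assms(1)]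
  show "0 < layer i" "layer i \<le> length ps" "ps ! (layer i - 1) = i"
    by auto
qed

lemma nu_char_tuple:
  assumes p: "tree_path ps" and k: "length ps = k"
  shows "nu k (char_tuple k ps) = {last ps}"
proof -
  let ?\<delta> = "char_tuple k ps"
  have S: "set ps \<subseteq> {1..m k}" using set_tree_path p k by blast
  have ne: "ps \<noteq> []" using p by (simp add: tree_path_def)
  have comp_in: "comp ?\<delta> i = 1 \<longleftrightarrow> i \<in> set ps" if "i \<in> {1..m k}" for i
    using comp_char_tuple[OF that] by simp
  have "1 \<in> set ps" using p ne by (metis hd_in_set tree_path_def)
  then have root: "comp ?\<delta> 1 = 1" using S comp_in by blast
  have no_inner_leaf: "\<not> (comp ?\<delta> (lch i) = 0 \<and> comp ?\<delta> (rch i) = 0)"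
    if "i \<in> set ps" "layer i < k" for i
  proof -
    define t where "t = layer i - 1"
    have t: "Suc t < length ps" "ps ! t = i"
      using tree_path_nth_layer[OF p that(1)] that(2) k by (auto simp: t_def)
    then have "child i (ps ! Suc t)" "ps ! Suc t \<in> set ps"
      using p by (auto simp: tree_path_def successively_nth)
    moreover from this have "comp ?\<delta> (ps ! Suc t) = 1" using S comp_in by blast
    ultimately show ?thesis by (auto simp: child_def)
  qed
  have "layer (last ps) = k" using layer_last_tree_path[OF p] k by simp
  moreover have "last ps \<in> {1..m k}" "comp ?\<delta> (last ps) = 1"
    using S ne comp_in last_in_set by blast+
  moreover have "i = last ps" if "i \<in> set ps" "layer i = k" for i
    using tree_path_nth_layer(3)[OF p that(1)] that(2) k ne by (simp add: last_conv_nth)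
  ultimately have "{i \<in> {1..m k}. layer i = k \<and> comp ?\<delta> i = 1} = {last ps}"
    using comp_in by blast
  moreover have "{i \<in> {1..m k}. layer i < k \<and> comp ?\<delta> i = 1
      \<and> comp ?\<delta> (lch i) = 0 \<and> comp ?\<delta> (rch i) = 0} = {}"
    using no_inner_leaf comp_in by blast
  ultimately show ?thesis using root unfolding nu_def by (simp only:) simp
qed

definition avoiding_ends :: "nat \<Rightarrow> nat set \<Rightarrow> nat set" where
  "avoiding_ends s A = last ` {ps. tree_path ps \<and> length ps = s \<and> set ps \<inter> A = {}}"

lemma avoiding_ends_subset: "avoiding_ends s A \<subseteq> node_num s ` {1..s}"
proof
  fix e assume "e \<in> avoiding_ends s A"
  then obtain ps where p: "tree_path ps" "length ps = s" "e = last ps"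
    by (auto simp: avoiding_ends_def)
  then have e: "e = ps ! (s - 1)" "s - 1 < length ps" "Suc (s - 1) = s"
    by (auto simp: tree_path_def last_conv_nth)
  obtain j where "1 \<le> j" "j \<le> Suc (s - 1)" "ps ! (s - 1) = node_num (Suc (s - 1)) j"
    using tree_path_nth[OF p(1) e(2)] .
  with e show "e \<in> node_num s ` {1..s}" by auto
qed

lemma finite_avoiding_ends: "finite (avoiding_ends s A)"
  using avoiding_ends_subset finite_subset by blast

lemma avoiding_ends_Suc:
  assumes "1 \<le> s"
  shows "avoiding_ends (Suc s) A = (lch ` avoiding_ends s A \<union> rch ` avoiding_ends s A) - A"
    (is "?E' = ?C - A")
proof
  show "?E' \<subseteq> ?C - A"
  proof
    fix e assume "e \<in> ?E'"
    then obtain ps where p: "tree_path ps" "length ps = Suc s" "set ps \<inter> A = {}" "e = last ps"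
      by (auto simp: avoiding_ends_def)
    obtain qs where ps: "ps = qs @ [e]"
      using p(1,4) by (metis append_butlast_last_id tree_path_def)
    have qs: "qs \<noteq> []" "length qs = s" using p(2) ps assms by auto
    then have "tree_path qs" "child (last qs) e"
      using p(1) tree_path_snoc_iff[OF qs(1)] ps by simp_all
    moreover have "set qs \<inter> A = {}" "e \<notin> A" using p(3) ps by auto
    ultimately have "last qs \<in> avoiding_ends s A" "e \<notin> A" "child (last qs) e"
      using qs(2) by (auto simp: avoiding_ends_def)
    then show "e \<in> ?C - A" by (auto simp: child_def)
  qed
next
  show "?C - A \<subseteq> ?E'"
  proof
    fix e assume e: "e \<in> ?C - A"
    then obtain ps where p: "tree_path ps" "length ps = s" "set ps \<inter> A = {}" "child (last ps) e"
      by (auto simp: avoiding_ends_def child_def)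
    then have "tree_path (ps @ [e])"
      using tree_path_snoc_iff by (auto simp: tree_path_def)
    then show "e \<in> ?E'"
      using p e unfolding avoiding_ends_def by (intro image_eqI[of _ _ "ps @ [e]"]) auto
  qed
qed

lemma card_less_card_Un_Suc_image:
  fixes J :: "nat set"
  assumes "finite J" "J \<noteq> {}"
  shows "card J < card (J \<union> Suc ` J)"
proof (rule psubset_card_mono)
  have "Suc (Max J) \<notin> J" using assms Max_ge Suc_n_not_le_n by blast
  moreover have "Suc (Max J) \<in> Suc ` J" using assms by simp
  ultimately show "J \<subset> J \<union> Suc ` J" by blast
qed (use assms in simp)

lemma children_node_num:
  assumes "J \<subseteq> {1..s}"
  shows "lch ` node_num s ` J \<union> rch ` node_num s ` J = node_num (Suc s) ` (J \<union> Suc ` J)"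
proof -
  have "lch (node_num s j) = node_num (Suc s) j" "rch (node_num s j) = node_num (Suc s) (Suc j)"
    if "j \<in> J" for j
    using assms that lch_node_num rch_node_num by auto
  then have "lch ` node_num s ` J = node_num (Suc s) ` J"
    and "rch ` node_num s ` J = node_num (Suc s) ` Suc ` J"
    unfolding image_image by (auto intro: image_cong)
  then show ?thesis by (simp add: image_Un)
qed

lemma card_avoiding_ends_ge:
  assumes "finite A" "avoiding_ends s A \<noteq> {}"
  shows "s \<le> card (avoiding_ends s A) + card {i \<in> A. layer i \<le> s}"
  using assms(2)
proof (induction s)
  case 0
  then show ?case by simp
next
  case (Suc s)
  show ?case
  proof (cases "s = 0")
    case True
    then show ?thesis
      using Suc.prems finite_avoiding_ends by (simp add: Suc_le_eq card_gt_0_iff)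
  next
    case False
    define E where "E = avoiding_ends s A"
    obtain J where J: "J \<subseteq> {1..s}" "E = node_num s ` J"
      using avoiding_ends_subset[of s A] by (auto simp: E_def subset_image_iff)
    define C where "C = node_num (Suc s) ` (J \<union> Suc ` J)"
    have ends_Suc: "avoiding_ends (Suc s) A = C - A"
      using avoiding_ends_Suc[of s A] False children_node_num[OF J(1)]
      by (simp add: C_def E_def[symmetric] J(2))
    have "J \<noteq> {}" using Suc.prems ends_Suc by (auto simp: C_def)
    have fin: "finite J" using J(1) finite_subset by blast
    have "card E < card C"
      using card_less_card_Un_Suc_image[OF fin \<open>J \<noteq> {}\<close>]
      by (simp add: J(2) C_def card_image inj_on_subset[OF inj_node_num])
    moreover have "s \<le> card E + card {i \<in> A. layer i \<le> s}"
      using Suc.IH \<open>J \<noteq> {}\<close> J(2) by (simp add: E_def)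
    moreover have "card C \<le> card (C - A) + card {i \<in> A. layer i = Suc s}"
    proof -
      have "J \<union> Suc ` J \<subseteq> {1..Suc s}" using J(1) by auto
      then have "C \<inter> A \<subseteq> {i \<in> A. layer i = Suc s}"
        by (auto simp: C_def layer_node_num)
      then have "card (C \<inter> A) \<le> card {i \<in> A. layer i = Suc s}"
        using assms(1) by (intro card_mono) auto
      moreover have "card C \<le> card (C - A) + card (C \<inter> A)"
        by (metis Int_Diff_Un card_Un_le sup_commute)
      ultimately show ?thesis by simp
    qed
    moreover have "card {i \<in> A. layer i \<le> Suc s}
        = card {i \<in> A. layer i \<le> s} + card {i \<in> A. layer i = Suc s}"
    proof -
      have "{i \<in> A. layer i \<le> Suc s}
          = {i \<in> A. layer i \<le> s} \<union> {i \<in> A. layer i = Suc s}"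
        using False by auto
      then show ?thesis using assms(1) by (simp add: card_Un_disjoint disjoint_iff)
    qed
    ultimately show ?thesis using ends_Suc by simp
  qed
qed

lemma subtable_Tstar_rows_zeros:
  assumes "1 \<le> k" "set attrs \<subseteq> {1..m k}"
  shows "subtable (Tstar_rows k) (map (\<lambda>i. (i, 0)) attrs)
    = char_tuple k ` {ps. tree_path ps \<and> length ps = k \<and> set ps \<inter> set attrs = {}}"
proof -
  have "Tstar_rows k = char_tuple k ` {ps. tree_path ps \<and> length ps = k}"
    using complete_path_iff[OF assms(1)] by (auto simp: Tstar_rows_def)
  moreover have "comp (char_tuple k ps) i = 0 \<longleftrightarrow> i \<notin> set ps" if "i \<in> set attrs" for i ps
    using assms(2) that comp_char_tuple[of i k ps] by auto
  ultimately show ?thesis by (auto simp: subtable_def)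
qed

lemma r_subtable_Tstar_rows_zeros:
  assumes "1 \<le> k" "set attrs \<subseteq> {1..m k}"
  shows "r k (subtable (Tstar_rows k) (map (\<lambda>i. (i, 0)) attrs))
    = card (avoiding_ends k (set attrs))"
proof -
  have "nu k ` subtable (Tstar_rows k) (map (\<lambda>i. (i, 0)) attrs)
      = (\<lambda>e. {e}) ` avoiding_ends k (set attrs)"
    unfolding subtable_Tstar_rows_zeros[OF assms] avoiding_ends_def image_image
    by (intro image_cong) (auto simp: nu_char_tuple)
  then show ?thesis by (simp add: r_def card_image)
qed

theorem lemma8:
  fixes k :: nat and attrs :: "nat list"
  assumes "k \<ge> 1"
    and "set attrs \<subseteq> {1..m k}"
    and "subtable (Tstar_rows k) (map (\<lambda>i. (i, 0)) attrs) \<noteq> {}"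
  shows "r k (subtable (Tstar_rows k) (map (\<lambda>i. (i, 0)) attrs)) \<ge> max 1 (k - length attrs)"
proof -
  let ?E = "avoiding_ends k (set attrs)"
  have ne: "?E \<noteq> {}"
    using assms(3) unfolding subtable_Tstar_rows_zeros[OF assms(1,2)] avoiding_ends_def by blast
  then have "1 \<le> card ?E" using finite_avoiding_ends by (simp add: Suc_le_eq card_gt_0_iff)
  moreover have "k - length attrs \<le> card ?E"
  proof -
    have "card {i \<in> set attrs. layer i \<le> k} \<le> length attrs"
      by (rule order.trans[OF card_mono card_length]) auto
    then show ?thesis using card_avoiding_ends_ge[OF List.finite_set ne] by linarith
  qed
  ultimately show ?thesis by (simp add: r_subtable_Tstar_rows_zeros[OF assms(1,2)])
qed

end
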